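(* Let $T$ be a lifted graph, $F\colon T\to T$ a continuous sun-like map of degree 1, ${\cal P}$ a basic partition of $F$ and ${\cal G}$ its covering graph. Let $\alpha=A_0\dots A_n/\!\sim$ be a vertex of ${\cal G}$ (with $A_0,\dots,A_n\in{\cal P}$) and let $\alpha\to\beta$ be an arrow in ${\cal G}$. Then there exists $A_{n+1}\in{\cal P}$ such that $\beta=A_0\dots A_nA_{n+1}/\!\sim$.
   Context: A lifted graph is a connected topological space $T$ with a homeomorphism $h\colon\mathbb R\to h(\mathbb R)\subset T$ and a homeomorphism $\tau\colon T\to T$ such that $\tau(h(x))=h(x+1)$, the closure of each connected component of $T\setminus h(\mathbb R)$ is a topological finite graph meeting $h(\mathbb R)$ in exactly one point, and only finitely many such components have closure meeting $h([0,1])$. Identify $h(\mathbb R)$ with $\mathbb R$, write $x+m:=\tau^m(x)$; $r_{\mathbb R}\colon T\to\mathbb R$ is the identity on $\mathbb R$ and maps a component $C$ of $T\setminus\mathbb R$ to the point $\overline C\cap\mathbb R$. $F$ has degree 1 if $F(x+1)=F(x)+1$. Let $T_{\mathbb R}:=\overline{\bigcup_{n\ge0}F^n(\mathbb R)}$, $X:=\overline{T\setminus T_{\mathbb R}}\cap r_{\mathbb R}^{-1}([0,1))$. $F$ is sun-like if $(T\setminus T_{\mathbb R})\cap r_{\mathbb R}^{-1}([0,1))$ consists of finitely many intervals with pairwise disjoint closures $X^i$, $i\in\Lambda$ (branches), each a compact interval meeting $T_{\mathbb R}$ in one endpoint $\min X^i$ (fixing the order of $X^i$). A basic partition is a finite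 family ${\cal P}=\{X^i_j\}$ of pairwise disjoint nonempty compact intervals $X^i_1<\dots<X^i_{N_i}$ in $X^i$, with $\ell(X^i_j)\in\Lambda$, $p(X^i_j)\in\mathbb Z$, such that $F(X^i_j)\subset(X^{\ell(X^i_j)}+p(X^i_j))\cup\mathrm{Int}(T_{\mathbb R})$, $F(\min X^i_j)=\min X^{\ell(X^i_j)}+p(X^i_j)$, and $F(X\setminus\bigcup X^i_j)\cap(X+\mathbb Z)=\emptyset$. For $A_0,\dots,A_n\in{\cal P}$, $\langle A_0\dots A_n\rangle:=F^n(\{x\in T: F^i(x)\in A_i+\mathbb Z,\ 0\le i\le n\})\cap X$. $A_0\dots A_n\sim B_0\dots B_m$ iff for some $k\le\min(n,m)$, $A_{n-i}=B_{m-i}$ ($0\le i\le k$) and $\langle A_0\dots A_{n-k}\rangle=A_{n-k}=B_{m-k}=\langle B_0\dots B_{m-k}\rangle$ (an equivalence relation). The covering graph ${\cal G}$: vertices are classes $A_0\dots A_n/\!\sim$ with $\langle A_0\dots A_n\rangle\ne\emptyset$; an arrow $\alpha\to\beta$ exists iff $\alpha=B_0\dots B_m/\!\sim$ and $\beta=B_0\dots B_mB_{m+1}/\!\sim$ for some $B_0,\dots,B_{m+1}\in{\cal P}$. *)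

theory Defs
  imports "HOL-Analysis.Analysis"
begin

definition finite_top_graph :: "'a topology \<Rightarrow> bool" where
  "finite_top_graph Y \<longleftrightarrow> Hausdorff_space Y \<and>
     (\<exists>V E. finite V \<and> finite E \<and> V \<subseteq> topspace Y \<and> topspace Y = V \<union> \<Union>E \<and>
        (\<forall>e\<in>E. e \<subseteq> topspace Y \<and> (\<exists>g. homeomorphic_map (top_of_set {0..1::real}) (subtopology Y e) g
                 \<and> g 0 \<noteq> g 1 \<and> e \<inter> V = {g 0, g 1})) \<and>
        (\<forall>e\<in>E. \<forall>e'\<in>E. e \<noteq> e' \<longrightarrow> e \<inter> e' \<subseteq> V))"

text \<open>Lifted graph (X = topology on T, h = embedding of the real line, tau = translation).\<close>
definition lifted_graph :: "'a topology \<Rightarrow> (real \<Rightarrow> 'a) \<Rightarrow> ('a \<Rightarrow> 'a) \<Rightarrow> bool" where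
  "lifted_graph X h tau \<longleftrightarrow> connected_space X \<and> embedding_map euclideanreal X h \<and>
     homeomorphic_map X X tau \<and> (\<forall>x. tau (h x) = h (x + 1)) \<and>
     (\<forall>C\<in>connected_components_of (subtopology X (topspace X - range h)).
        finite_top_graph (subtopology X (X closure_of C)) \<and>
        (\<exists>!y. y \<in> X closure_of C \<inter> range h)) \<and>
     finite {C\<in>connected_components_of (subtopology X (topspace X - range h)).
               X closure_of C \<inter> h ` {0..1} \<noteq> {}}"

text \<open>Integer powers of tau: x + m.\<close>
definition tpow :: "'a topology \<Rightarrow> ('a \<Rightarrow> 'a) \<Rightarrow> int \<Rightarrow> 'a \<Rightarrow> 'a" where
  "tpow X tau m x = (if 0 \<le> m then (tau ^^ nat m) x else (inv_into (topspace X) tau ^^ nat (- m)) x)"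

definition degree_one :: "'a topology \<Rightarrow> ('a \<Rightarrow> 'a) \<Rightarrow> ('a \<Rightarrow> 'a) \<Rightarrow> bool" where
  "degree_one X tau F \<longleftrightarrow> (\<forall>x\<in>topspace X. F (tau x) = tau (F x))"

definition rR :: "'a topology \<Rightarrow> (real \<Rightarrow> 'a) \<Rightarrow> 'a \<Rightarrow> real" where
  "rR X h y = (if y \<in> range h then inv h y
     else (THE t. h t \<in> X closure_of
              connected_component_of_set (subtopology X (topspace X - range h)) y))"

definition TR :: "'a topology \<Rightarrow> (real \<Rightarrow> 'a) \<Rightarrow> ('a \<Rightarrow> 'a) \<Rightarrow> 'a set" where
  "TR X h F = X closure_of (\<Union>n. (F ^^ n) ` range h)"

definition unitfib :: "'a topology \<Rightarrow> (real \<Rightarrow> 'a) \<Rightarrow> 'a set" where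
  "unitfib X h = {y \<in> topspace X. 0 \<le> rR X h y \<and> rR X h y < 1}"

definition Sset :: "'a topology \<Rightarrow> (real \<Rightarrow> 'a) \<Rightarrow> ('a \<Rightarrow> 'a) \<Rightarrow> 'a set" where
  "Sset X h F = (topspace X - TR X h F) \<inter> unitfib X h"

definition Xset :: "'a topology \<Rightarrow> (real \<Rightarrow> 'a) \<Rightarrow> ('a \<Rightarrow> 'a) \<Rightarrow> 'a set" where
  "Xset X h F = (X closure_of (topspace X - TR X h F)) \<inter> unitfib X h"

definition sun_like :: "'a topology \<Rightarrow> (real \<Rightarrow> 'a) \<Rightarrow> ('a \<Rightarrow> 'a) \<Rightarrow> bool" where
  "sun_like X h F \<longleftrightarrow>
     (let Cs = connected_components_of (subtopology X (Sset X h F)) in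
       finite Cs \<and>
       pairwise (\<lambda>C D. X closure_of C \<inter> X closure_of D = {}) Cs \<and>
       (\<forall>C\<in>Cs. \<exists>g. homeomorphic_map (top_of_set {0..1::real}) (subtopology X (X closure_of C)) g \<and>
                  X closure_of C \<inter> TR X h F = {g 0}))"

text \<open>The branches X^i (the index set Lambda is identified with the set of branches).\<close>
definition branches :: "'a topology \<Rightarrow> (real \<Rightarrow> 'a) \<Rightarrow> ('a \<Rightarrow> 'a) \<Rightarrow> 'a set set" where
  "branches X h F = (\<lambda>C. X closure_of C) ` connected_components_of (subtopology X (Sset X h F))"

definition bmin :: "'a topology \<Rightarrow> (real \<Rightarrow> 'a) \<Rightarrow> ('a \<Rightarrow> 'a) \<Rightarrow> 'a set \<Rightarrow> 'a" where
  "bmin X h F B = (THE m. m \<in> B \<inter> TR X h F)"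

definition ble :: "'a topology \<Rightarrow> (real \<Rightarrow> 'a) \<Rightarrow> ('a \<Rightarrow> 'a) \<Rightarrow> 'a set \<Rightarrow> 'a \<Rightarrow> 'a \<Rightarrow> bool" where
  "ble X h F B x y \<longleftrightarrow> (\<exists>g s t. homeomorphic_map (top_of_set {0..1::real}) (subtopology X B) g \<and>
      g 0 = bmin X h F B \<and> s \<in> {0..1} \<and> t \<in> {0..1} \<and> g s = x \<and> g t = y \<and> s \<le> t)"

definition cinterval :: "'a topology \<Rightarrow> (real \<Rightarrow> 'a) \<Rightarrow> ('a \<Rightarrow> 'a) \<Rightarrow> 'a set \<Rightarrow> 'a set \<Rightarrow> bool" where
  "cinterval X h F B J \<longleftrightarrow> J \<noteq> {} \<and>
     (\<exists>a\<in>B. \<exists>b\<in>B. J = {x\<in>B. ble X h F B a x \<and> ble X h F B x b})"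

definition imin :: "'a topology \<Rightarrow> (real \<Rightarrow> 'a) \<Rightarrow> ('a \<Rightarrow> 'a) \<Rightarrow> 'a set \<Rightarrow> 'a set \<Rightarrow> 'a" where
  "imin X h F B J = (THE m. m \<in> J \<and> (\<forall>y\<in>J. ble X h F B m y))"

definition shiftZ :: "'a topology \<Rightarrow> ('a \<Rightarrow> 'a) \<Rightarrow> 'a set \<Rightarrow> 'a set" where
  "shiftZ X tau A = (\<Union>m. tpow X tau m ` A)"

definition basic_partition ::
  "'a topology \<Rightarrow> (real \<Rightarrow> 'a) \<Rightarrow> ('a \<Rightarrow> 'a) \<Rightarrow> ('a \<Rightarrow> 'a) \<Rightarrow> 'a set set \<Rightarrow> bool" where
  "basic_partition X h tau F P \<longleftrightarrow> finite P \<and> pairwise disjnt P \<and>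
     (\<exists>(l :: 'a set \<Rightarrow> 'a set) (p :: 'a set \<Rightarrow> int). \<forall>A\<in>P.
        (\<exists>B\<in>branches X h F. A \<subseteq> B \<and> cinterval X h F B A \<and>
             F (imin X h F B A) = tpow X tau (p A) (bmin X h F (l A))) \<and>
        l A \<in> branches X h F \<and>
        F ` A \<subseteq> tpow X tau (p A) ` (l A) \<union> X interior_of (TR X h F)) \<and>
     F ` (Xset X h F - \<Union>P) \<inter> shiftZ X tau (Xset X h F) = {}"

text \<open>\<langle>A_0 ... A_n\<rangle> for a nonempty list As = [A_0,...,A_n].\<close>
definition angle ::
  "'a topology \<Rightarrow> (real \<Rightarrow> 'a) \<Rightarrow> ('a \<Rightarrow> 'a) \<Rightarrow> ('a \<Rightarrow> 'a) \<Rightarrow> 'a set list \<Rightarrow> 'a set" where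
  "angle X h tau F As = (F ^^ (length As - 1)) `
       {x\<in>topspace X. \<forall>i<length As. (F ^^ i) x \<in> shiftZ X tau (As ! i)} \<inter> Xset X h F"

definition seq_equiv ::
  "'a topology \<Rightarrow> (real \<Rightarrow> 'a) \<Rightarrow> ('a \<Rightarrow> 'a) \<Rightarrow> ('a \<Rightarrow> 'a) \<Rightarrow> 'a set list \<Rightarrow> 'a set list \<Rightarrow> bool" where
  "seq_equiv X h tau F As Bs \<longleftrightarrow> As \<noteq> [] \<and> Bs \<noteq> [] \<and>
     (let n = length As - 1; m = length Bs - 1 in
      \<exists>k\<le>min n m. (\<forall>i\<le>k. As ! (n - i) = Bs ! (m - i)) \<and>
        angle X h tau F (take (n - k + 1) As) = As ! (n - k) \<and>
        As ! (n - k) = Bs ! (m - k) \<and>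
        angle X h tau F (take (m - k + 1) Bs) = Bs ! (m - k))"

definition cls ::
  "'a topology \<Rightarrow> (real \<Rightarrow> 'a) \<Rightarrow> ('a \<Rightarrow> 'a) \<Rightarrow> ('a \<Rightarrow> 'a) \<Rightarrow> 'a set set \<Rightarrow> 'a set list \<Rightarrow> 'a set list set" where
  "cls X h tau F P As = {Bs. Bs \<in> lists P \<and> seq_equiv X h tau F As Bs}"

definition cg_vertices ::
  "'a topology \<Rightarrow> (real \<Rightarrow> 'a) \<Rightarrow> ('a \<Rightarrow> 'a) \<Rightarrow> ('a \<Rightarrow> 'a) \<Rightarrow> 'a set set \<Rightarrow> 'a set list set set" where
  "cg_vertices X h tau F P =
     {cls X h tau F P As | As. As \<in> lists P \<and> As \<noteq> [] \<and> angle X h tau F As \<noteq> {}}"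

definition cg_arrow ::
  "'a topology \<Rightarrow> (real \<Rightarrow> 'a) \<Rightarrow> ('a \<Rightarrow> 'a) \<Rightarrow> ('a \<Rightarrow> 'a) \<Rightarrow> 'a set set \<Rightarrow>
     'a set list set \<Rightarrow> 'a set list set \<Rightarrow> bool" where
  "cg_arrow X h tau F P \<alpha> \<beta> \<longleftrightarrow> \<alpha> \<in> cg_vertices X h tau F P \<and> \<beta> \<in> cg_vertices X h tau F P \<and>
     (\<exists>Bs\<in>lists P. Bs \<noteq> [] \<and> (\<exists>B\<in>P. \<alpha> = cls X h tau F P Bs \<and> \<beta> = cls X h tau F P (Bs @ [B])))"

end

theory Submission
  imports Defs
begin

text \<open>The relation \<open>\<sim>\<close> says that two sequences share a tail \<open>C Cs\<close> whose first letter is full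
  after both prefixes, i.e. \<open>\<langle>As C\<rangle> = C = \<langle>Bs C\<rangle>\<close>. It is an equivalence relation on
  sequences from \<open>\<P>\<close>. Reflexivity holds because \<open>\<langle>A\<rangle> = A\<close>: distinct integer translates of
  a point of a branch have retractions differing by a nonzero integer, so only one of them lies
  in \<open>X\<close>. Transitivity holds because fullness of \<open>C\<close> after \<open>As\<close> gives
  \<open>\<langle>As C Cs\<rangle> = \<langle>C Cs\<rangle>\<close>, the degree-one map commuting with the translations. Appending a
  letter respects \<open>\<sim>\<close>, so if \<open>\<alpha> = As/\<sim> = Bs/\<sim>\<close> and \<open>\<beta> = Bs B/\<sim>\<close>, then
  \<open>\<beta> = As B/\<sim>\<close>.\<close>

lemma tpow_0 [simp]: "tpow X tau 0 x = x"
  by (simp add: tpow_def)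

lemma mem_shiftZ: "y \<in> shiftZ X tau A \<longleftrightarrow> (\<exists>m. \<exists>a\<in>A. y = tpow X tau m a)"
  by (auto simp: shiftZ_def)

context
  fixes X :: "'a topology" and tau :: "'a \<Rightarrow> 'a"
  assumes hom: "homeomorphic_map X X tau"
begin

lemma tau_in_topspace: "x \<in> topspace X \<Longrightarrow> tau x \<in> topspace X"
  using homeomorphic_imp_surjective_map[OF hom] by blast

lemma inj_on_tau: "inj_on tau (topspace X)"
  using homeomorphic_imp_injective_map[OF hom] .

lemma tau_inv_into: "x \<in> topspace X \<Longrightarrow> tau (inv_into (topspace X) tau x) = x"
  using homeomorphic_imp_surjective_map[OF hom] by (metis f_inv_into_f)

lemma tpow_in_topspace:
  assumes "x \<in> topspace X" shows "tpow X tau m x \<in> topspace X"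
proof -
  have "inv_into (topspace X) tau y \<in> topspace X" if "y \<in> topspace X" for y
    using that homeomorphic_imp_surjective_map[OF hom] by (metis inv_into_into)
  then have "(inv_into (topspace X) tau ^^ k) y \<in> topspace X \<and> (tau ^^ k) y \<in> topspace X"
    if "y \<in> topspace X" for k y
    using that by (induction k) (auto simp: tau_in_topspace)
  then show ?thesis
    using assms by (simp add: tpow_def)
qed

lemma tpow_succ:
  assumes "x \<in> topspace X" shows "tpow X tau (m + 1) x = tau (tpow X tau m x)"
proof -
  consider "m \<ge> 0" | "m = -1" | "m < -1" by linarith
  then show ?thesis
  proof cases
    case 1
    then have "nat (m + 1) = Suc (nat m)" by simp
    with 1 show ?thesis by (simp add: tpow_def)
  next
    case 2
    then show ?thesis by (simp add: tpow_def tau_inv_into assms)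
  next
    case 3
    then have "nat (- m) = Suc (nat (- (m + 1)))" by simp
    with 3 show ?thesis
      using tpow_in_topspace[OF assms, of "m + 1"] by (simp add: tpow_def tau_inv_into)
  qed
qed

lemma tau_orbits_eq:
  fixes u v :: "int \<Rightarrow> 'a"
  assumes "\<And>m. u m \<in> topspace X" "\<And>m. v m \<in> topspace X" "u 0 = v 0"
    and "\<And>m. u (m + 1) = tau (u m)" "\<And>m. v (m + 1) = tau (v m)"
  shows "u m = v m"
proof (induction m rule: int_induct[where k = 0])
  case (step2 i)
  then have "tau (u (i - 1)) = tau (v (i - 1))"
    using assms(4,5)[of "i - 1"] by simp
  then show ?case
    using inj_onD[OF inj_on_tau] assms(1,2) by blast
qed (use assms in simp_all)

lemma tpow_add:
  assumes "x \<in> topspace X" shows "tpow X tau m (tpow X tau m' x) = tpow X tau (m + m') x"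
proof (rule tau_orbits_eq[where u = "\<lambda>m. tpow X tau m (tpow X tau m' x)"])
  show "tpow X tau (m + 1 + m') x = tau (tpow X tau (m + m') x)" for m
    using tpow_succ[OF assms, of "m + m'"] by (simp add: ac_simps)
qed (simp_all add: assms tpow_in_topspace tpow_succ)

lemma tpow_commute:
  assumes "x \<in> topspace X"
    and "\<And>y. y \<in> topspace X \<Longrightarrow> g y \<in> topspace X"
    and "\<And>y. y \<in> topspace X \<Longrightarrow> g (tau y) = tau (g y)"
  shows "g (tpow X tau m x) = tpow X tau m (g x)"
  by (rule tau_orbits_eq[where u = "\<lambda>m. g (tpow X tau m x)" and v = "\<lambda>m. tpow X tau m (g x)"])
     (simp_all add: assms tpow_in_topspace tpow_succ)

lemma tpow_additive:
  fixes \<phi> :: "'a \<Rightarrow> real"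
  assumes "x \<in> topspace X" and "\<And>y. y \<in> topspace X \<Longrightarrow> \<phi> (tau y) = \<phi> y + 1"
  shows "\<phi> (tpow X tau m x) = \<phi> x + of_int m"
proof (induction m rule: int_induct[where k = 0])
  case (step1 i)
  then show ?case
    using assms tpow_in_topspace tpow_succ by simp
next
  case (step2 i)
  have "\<phi> (tpow X tau i x) = \<phi> (tpow X tau (i - 1) x) + 1"
    using assms tpow_in_topspace tpow_succ[of x "i - 1"] by simp
  with step2 show ?case by simp
qed simp

lemma tpow_in_shiftZ:
  assumes "A \<subseteq> topspace X" "y \<in> shiftZ X tau A"
  shows "tpow X tau m y \<in> shiftZ X tau A"
  using assms tpow_add unfolding mem_shiftZ by (metis subsetD)

end

definition itinerary :: "'a topology \<Rightarrow> ('a \<Rightarrow> 'a) \<Rightarrow> ('a \<Rightarrow> 'a) \<Rightarrow> 'a set list \<Rightarrow> 'a set" where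
  "itinerary X tau F As = {x \<in> topspace X. \<forall>i<length As. (F ^^ i) x \<in> shiftZ X tau (As ! i)}"

lemma angle_eq_image_itinerary:
  "angle X h tau F As = (F ^^ (length As - 1)) ` itinerary X tau F As \<inter> Xset X h F"
  by (simp add: angle_def itinerary_def)

context
  fixes X :: "'a topology" and tau F :: "'a \<Rightarrow> 'a"
  assumes hom: "homeomorphic_map X X tau" and cont: "continuous_map X X F"
    and deg: "degree_one X tau F"
begin

lemma funpow_in_topspace: "x \<in> topspace X \<Longrightarrow> (F ^^ k) x \<in> topspace X"
  using continuous_map_image_subset_topspace[OF cont] by (induction k) auto

lemma funpow_tpow:
  assumes "x \<in> topspace X" shows "(F ^^ k) (tpow X tau m x) = tpow X tau m ((F ^^ k) x)"
proof (rule tpow_commute[OF hom assms])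
  show "(F ^^ k) (tau y) = tau ((F ^^ k) y)" if "y \<in> topspace X" for y
    using that deg funpow_in_topspace by (induction k) (auto simp: degree_one_def)
qed (rule funpow_in_topspace)

lemma image_itinerary_append_subset:
  "(F ^^ length As) ` itinerary X tau F (As @ Bs) \<subseteq> itinerary X tau F Bs"
proof clarify
  fix x assume x: "x \<in> itinerary X tau F (As @ Bs)"
  have "(F ^^ i) ((F ^^ length As) x) \<in> shiftZ X tau (Bs ! i)" if "i < length Bs" for i
  proof -
    have "(F ^^ (i + length As)) x \<in> shiftZ X tau ((As @ Bs) ! (i + length As))"
      using x that by (simp add: itinerary_def)
    then show ?thesis
      by (simp add: funpow_add nth_append)
  qed
  then show "(F ^^ length As) x \<in> itinerary X tau F Bs"
    using x funpow_in_topspace by (simp add: itinerary_def)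
qed

text \<open>A point of \<open>C + m\<close> is the image of a point following \<open>As @ [C]\<close>, translated by \<open>m\<close>;
  the translation commutes with \<open>F\<close> because \<open>F\<close> has degree one.\<close>
lemma itinerary_subset_image_append_full:
  assumes sub: "\<Union> (set (As @ C # Cs)) \<subseteq> topspace X"
    and full: "angle X h tau F (As @ [C]) = C"
  shows "itinerary X tau F (C # Cs) \<subseteq> (F ^^ length As) ` itinerary X tau F (As @ C # Cs)"
proof
  fix y assume y: "y \<in> itinerary X tau F (C # Cs)"
  then have "(F ^^ 0) y \<in> shiftZ X tau ((C # Cs) ! 0)"
    unfolding itinerary_def by blast
  then have "y \<in> shiftZ X tau C"
    by simp
  then obtain m z where z: "z \<in> C" "y = tpow X tau m z"
    unfolding mem_shiftZ by blast
  then obtain x where x: "x \<in> itinerary X tau F (As @ [C])" "z = (F ^^ length As) x"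
    using full by (auto simp: angle_eq_image_itinerary)
  define x' where "x' = tpow X tau m x"
  have xT: "x \<in> topspace X"
    using x by (simp add: itinerary_def)
  have x'y: "(F ^^ length As) x' = y"
    using x xT z by (simp add: x'_def funpow_tpow)
  have "(F ^^ i) x' \<in> shiftZ X tau ((As @ C # Cs) ! i)" if "i < length (As @ C # Cs)" for i
  proof (cases "i \<le> length As")
    case True
    then have "(F ^^ i) x \<in> shiftZ X tau ((As @ C # Cs) ! i)"
      using x(1) unfolding itinerary_def
      by (auto simp: nth_append dest!: spec[of _ i] split: if_splits)
    moreover have "(As @ C # Cs) ! i \<subseteq> topspace X"
      using sub nth_mem[OF that] by blast
    ultimately show ?thesis
      using xT by (simp add: x'_def funpow_tpow tpow_in_shiftZ[OF hom])
  next
    case False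
    define d where "d = i - length As"
    have d: "i = d + length As" "d < length (C # Cs)"
      using that False by (auto simp: d_def)
    then have "(F ^^ i) x' = (F ^^ d) y"
      using x'y by (simp add: funpow_add)
    then show ?thesis
      using y d unfolding itinerary_def by (simp add: nth_append)
  qed
  moreover have "x' \<in> topspace X"
    using xT by (simp add: x'_def tpow_in_topspace[OF hom])
  ultimately show "y \<in> (F ^^ length As) ` itinerary X tau F (As @ C # Cs)"
    using x'y unfolding itinerary_def by blast
qed

lemma angle_append_full:
  assumes "\<Union> (set (As @ C # Cs)) \<subseteq> topspace X"
    and "angle X h tau F (As @ [C]) = C"
  shows "angle X h tau F (As @ C # Cs) = angle X h tau F (C # Cs)"
proof -
  have "length (As @ C # Cs) - 1 = length Cs + length As"
    by simp
  then have "(F ^^ (length (As @ C # Cs) - 1)) ` itinerary X tau F (As @ C # Cs)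
      = (F ^^ length Cs) ` (F ^^ length As) ` itinerary X tau F (As @ C # Cs)"
    by (simp only: funpow_add image_comp)
  moreover have "(F ^^ length As) ` itinerary X tau F (As @ C # Cs) = itinerary X tau F (C # Cs)"
    using image_itinerary_append_subset itinerary_subset_image_append_full[OF assms]
    by (rule subset_antisym)
  ultimately show ?thesis
    by (simp add: angle_eq_image_itinerary)
qed

end

lemma seq_equiv_iff_common_suffix:
  "seq_equiv X h tau F As Bs \<longleftrightarrow>
     (\<exists>As' Bs' C Cs. As = As' @ C # Cs \<and> Bs = Bs' @ C # Cs \<and>
        angle X h tau F (As' @ [C]) = C \<and> angle X h tau F (Bs' @ [C]) = C)"
  (is "_ \<longleftrightarrow> ?suffix")
proof
  assume "seq_equiv X h tau F As Bs"
  then obtain k where ne: "As \<noteq> []" "Bs \<noteq> []"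
    and k: "k \<le> min (length As - 1) (length Bs - 1)"
    and tail: "\<forall>i\<le>k. As ! (length As - 1 - i) = Bs ! (length Bs - 1 - i)"
    and fullA: "angle X h tau F (take (length As - 1 - k + 1) As) = As ! (length As - 1 - k)"
    and fullB: "angle X h tau F (take (length Bs - 1 - k + 1) Bs) = Bs ! (length Bs - 1 - k)"
    unfolding seq_equiv_def Let_def by blast
  define a b where "a = length As - 1 - k" and "b = length Bs - 1 - k"
  have a: "a < length As" and b: "b < length Bs"
    using ne by (auto simp: a_def b_def)
  have "drop a As = drop b Bs"
  proof (rule nth_equalityI)
    show "length (drop a As) = length (drop b Bs)"
      using k ne[folded length_greater_0_conv] unfolding a_def b_def length_drop by arith
    fix i assume "i < length (drop a As)"
    then have "i \<le> k" and idx: "a + i = length As - 1 - (k - i)" "b + i = length Bs - 1 - (k - i)"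
      using k by (auto simp: a_def b_def)
    have "As ! (length As - 1 - (k - i)) = Bs ! (length Bs - 1 - (k - i))"
      using tail diff_le_self by blast
    then show "drop a As ! i = drop b Bs ! i"
      using a b by (simp only: nth_drop less_imp_le idx)
  qed
  then have "As = take a As @ As ! a # drop (Suc a) As" "Bs = take b Bs @ As ! a # drop (Suc a) As"
    using a b by (metis Cons_nth_drop_Suc append_take_drop_id nth_via_drop)+
  moreover have "angle X h tau F (take a As @ [As ! a]) = As ! a"
    "angle X h tau F (take b Bs @ [Bs ! b]) = Bs ! b"
    using fullA fullB a b by (simp_all add: a_def b_def take_Suc_conv_app_nth)
  moreover have "Bs ! b = As ! a"
    using tail k by (simp add: a_def b_def)
  ultimately show ?suffix
    by metis
next
  assume ?suffix
  then obtain As' Bs' C Cs where As: "As = As' @ C # Cs" and Bs: "Bs = Bs' @ C # Cs"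
    and fullA: "angle X h tau F (As' @ [C]) = C" and fullB: "angle X h tau F (Bs' @ [C]) = C"
    by blast
  define k where "k = length Cs"
  have "As ! (length As - 1 - i) = Bs ! (length Bs - 1 - i)" if "i \<le> k" for i
  proof -
    have "length As - 1 - i = length As' + (k - i)" "length Bs - 1 - i = length Bs' + (k - i)"
      using that by (simp_all add: As Bs k_def)
    then show ?thesis
      by (simp add: As Bs nth_append_length_plus)
  qed
  moreover have "length As - 1 - k = length As'" "length Bs - 1 - k = length Bs'"
    by (simp_all add: As Bs k_def)
  ultimately show "seq_equiv X h tau F As Bs"
    unfolding seq_equiv_def Let_def using fullA fullB
    by (intro conjI exI[of _ k]) (auto simp: As Bs k_def)
qed

lemma seq_equiv_sym: "seq_equiv X h tau F As Bs \<Longrightarrow> seq_equiv X h tau F Bs As"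
  unfolding seq_equiv_iff_common_suffix by blast

lemma seq_equiv_snoc: "seq_equiv X h tau F As Bs \<Longrightarrow> seq_equiv X h tau F (As @ [B]) (Bs @ [B])"
  unfolding seq_equiv_iff_common_suffix by (metis append.assoc append_Cons)

lemma seq_equiv_refl:
  assumes "As \<noteq> []" and "angle X h tau F [hd As] = hd As"
  shows "seq_equiv X h tau F As As"
  unfolding seq_equiv_iff_common_suffix
  using assms by (metis append_Nil list.exhaust_sel)

context
  fixes X :: "'a topology" and tau F :: "'a \<Rightarrow> 'a"
  assumes hom: "homeomorphic_map X X tau" and cont: "continuous_map X X F"
    and deg: "degree_one X tau F"
begin

lemma angle_snoc_full_transfer:
  assumes subA: "\<Union> (set (As @ Us @ [D])) \<subseteq> topspace X"
    and subB: "\<Union> (set (Bs @ Us @ [D])) \<subseteq> topspace X"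
    and fullA: "angle X h tau F (As @ [C]) = C" and fullB: "angle X h tau F (Bs @ [C]) = C"
    and full: "angle X h tau F (Bs @ Us @ [D]) = D"
    and start: "Us @ D # Ds = C # Cs"
  shows "angle X h tau F (As @ Us @ [D]) = D"
proof (cases Us)
  case Nil
  then show ?thesis
    using start fullA by simp
next
  case (Cons U Us')
  then have "U = C"
    using start by simp
  then have "angle X h tau F (As @ Us @ [D]) = angle X h tau F (C # Us' @ [D])"
    using angle_append_full[OF hom cont deg _ fullA] subA Cons by simp
  also have "\<dots> = angle X h tau F (Bs @ Us @ [D])"
    using angle_append_full[OF hom cont deg _ fullB] subB Cons \<open>U = C\<close> by simp
  finally show ?thesis
    using full by simp
qed

lemma seq_equiv_trans:
  assumes subA: "\<Union> (set As) \<subseteq> topspace X" and subB: "\<Union> (set Bs) \<subseteq> topspace X"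
    and subZ: "\<Union> (set Zs) \<subseteq> topspace X"
    and AB: "seq_equiv X h tau F As Bs" and BZ: "seq_equiv X h tau F Bs Zs"
  shows "seq_equiv X h tau F As Zs"
proof -
  obtain As' Bs' C Cs where As: "As = As' @ C # Cs" and Bs: "Bs = Bs' @ C # Cs"
    and fullA: "angle X h tau F (As' @ [C]) = C" and fullB: "angle X h tau F (Bs' @ [C]) = C"
    using AB unfolding seq_equiv_iff_common_suffix by blast
  obtain Bs'' Zs' D Ds where Bs2: "Bs = Bs'' @ D # Ds" and Zs: "Zs = Zs' @ D # Ds"
    and fullB2: "angle X h tau F (Bs'' @ [D]) = D" and fullZ: "angle X h tau F (Zs' @ [D]) = D"
    using BZ unfolding seq_equiv_iff_common_suffix by blast
  obtain Us where "Bs' = Bs'' @ Us \<and> Us @ C # Cs = D # Ds \<or> Bs' @ Us = Bs'' \<and> C # Cs = Us @ D # Ds"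
    using Bs Bs2 append_eq_append_conv2[of Bs' "C # Cs" Bs'' "D # Ds"] by auto
  then show ?thesis
  proof (elim disjE conjE)
    assume "Bs' = Bs'' @ Us" and suffix: "Us @ C # Cs = D # Ds"
    have "angle X h tau F (Zs' @ Us @ [C]) = C"
      using angle_snoc_full_transfer[OF _ _ fullZ fullB2 _ suffix] subZ subB fullB
      by (simp add: Zs Bs Bs2 flip: suffix) (simp add: \<open>Bs' = Bs'' @ Us\<close>)
    then show ?thesis
      unfolding seq_equiv_iff_common_suffix using As Zs suffix fullA
      by (metis append.assoc)
  next
    assume "Bs' @ Us = Bs''" and suffix: "C # Cs = Us @ D # Ds"
    have "angle X h tau F (As' @ Us @ [D]) = D"
      using angle_snoc_full_transfer[OF _ _ fullA fullB _ suffix[symmetric]] subA subB fullB2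
      by (simp add: As Bs2 suffix flip: \<open>Bs' @ Us = Bs''\<close>)
    then show ?thesis
      unfolding seq_equiv_iff_common_suffix using As Zs suffix fullZ
      by (metis append.assoc)
  qed
qed

end

lemma Xset_subset_topspace: "Xset X h F \<subseteq> topspace X"
  using closure_of_subset_topspace by (fastforce simp: Xset_def)

context
  fixes X :: "'a topology" and h :: "real \<Rightarrow> 'a" and tau :: "'a \<Rightarrow> 'a"
  assumes lg: "lifted_graph X h tau"
begin

abbreviation off_line :: "'a topology" where
  "off_line \<equiv> subtopology X (topspace X - range h)"

lemma lifted_graph_homeomorphic_tau: "homeomorphic_map X X tau"
  using lg by (simp add: lifted_graph_def)

lemma tau_h: "tau (h x) = h (x + 1)"
  using lg by (simp add: lifted_graph_def)

lemma embedding_h: "embedding_map euclideanreal X h"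
  using lg by (simp add: lifted_graph_def)

lemma inj_h: "inj h"
  using embedding_h homeomorphic_imp_injective_map unfolding embedding_map_def by fastforce

lemma h_in_topspace: "h x \<in> topspace X"
  using embedding_h homeomorphic_imp_surjective_map unfolding embedding_map_def
  by (metis IntE UNIV_I image_eqI topspace_euclidean topspace_subtopology)

lemma rR_h [simp]: "rR X h (h s) = s"
  by (simp add: rR_def inj_h)

lemma attachment_point_unique:
  assumes C: "C \<in> connected_components_of off_line"
  shows "\<exists>!t. h t \<in> X closure_of C"
proof -
  have "\<forall>C\<in>connected_components_of off_line.
          finite_top_graph (subtopology X (X closure_of C)) \<and> (\<exists>!y. y \<in> X closure_of C \<inter> range h)"
    using lg unfolding lifted_graph_def by (elim conjE)
  then have "\<exists>!y. y \<in> X closure_of C \<inter> range h"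
    using C by blast
  then obtain t where t: "h t \<in> X closure_of C" and unique: "\<And>y. y \<in> X closure_of C \<inter> range h \<Longrightarrow> y = h t"
    by blast
  show ?thesis
  proof (rule ex1I[of _ t])
    show "s = t" if "h s \<in> X closure_of C" for s
      using unique[of "h s"] that inj_h by (simp add: inj_eq)
  qed (rule t)
qed

lemma h_in_closure_component_iff:
  assumes "y \<in> topspace X" "y \<notin> range h"
  shows "h t \<in> X closure_of connected_component_of_set off_line y \<longleftrightarrow> t = rR X h y"
proof -
  let ?C = "connected_component_of_set off_line y"
  have unique: "\<exists>!t. h t \<in> X closure_of ?C"
    using assms by (simp add: attachment_point_unique connected_component_in_connected_components_of)
  have "rR X h y = (THE t. h t \<in> X closure_of ?C)"
    using assms(2) by (simp add: rR_def)
  then have "h (rR X h y) \<in> X closure_of ?C"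
    using theI'[OF unique] by simp
  then show ?thesis
    using unique by blast
qed

lemma tau_in_range_h_iff:
  assumes "x \<in> topspace X" shows "tau x \<in> range h \<longleftrightarrow> x \<in> range h"
proof
  assume "tau x \<in> range h"
  then obtain t where "tau x = tau (h (t - 1))"
    using tau_h by (metis diff_add_cancel rangeE)
  then have "x = h (t - 1)"
    using inj_on_tau[OF lifted_graph_homeomorphic_tau] assms h_in_topspace by (meson inj_onD)
  then show "x \<in> range h" by simp
qed (auto simp: tau_h)

lemma rR_tau:
  assumes y: "y \<in> topspace X" shows "rR X h (tau y) = rR X h y + 1"
proof (cases "y \<in> range h")
  case True
  then show ?thesis
    by (auto simp: tau_h)
next
  case False
  let ?C = "connected_component_of_set off_line y"
  have "homeomorphic_map off_line off_line tau"
    using lifted_graph_homeomorphic_tau tau_in_range_h_iff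
    by (intro homeomorphic_map_subtopologies_alt) auto
  then have "connected_component_of_set off_line (tau y) = tau ` ?C"
    using y False by (simp add: homeomorphic_map_connected_component_of)
  moreover have "?C \<subseteq> topspace X"
    using connected_component_of_subset_topspace[of off_line y] by auto
  ultimately have "X closure_of connected_component_of_set off_line (tau y) = tau ` (X closure_of ?C)"
    using lifted_graph_homeomorphic_tau by (simp add: homeomorphic_map_closure_of)
  moreover have "h (rR X h y) \<in> X closure_of ?C"
    using h_in_closure_component_iff[OF y False] by simp
  ultimately have "h (rR X h y + 1) \<in> X closure_of connected_component_of_set off_line (tau y)"
    by (metis image_eqI tau_h)
  moreover have "tau y \<in> topspace X" "tau y \<notin> range h"
    using y False tau_in_range_h_iff tau_in_topspace[OF lifted_graph_homeomorphic_tau] by auto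
  ultimately show ?thesis
    using h_in_closure_component_iff by simp
qed

lemma rR_tpow: "y \<in> topspace X \<Longrightarrow> rR X h (tpow X tau m y) = rR X h y + of_int m"
  using tpow_additive[OF lifted_graph_homeomorphic_tau] rR_tau by blast

text \<open>\<open>C\<close> lies in a single component of the complement of the line, and the closure of that
  component meets the line in exactly one point.\<close>
lemma rR_closure_component:
  assumes S: "S \<subseteq> topspace X - range h"
    and C: "C \<in> connected_components_of (subtopology X S)" and c: "c \<in> C"
    and y: "y \<in> X closure_of C"
  shows "rR X h y = rR X h c"
proof -
  let ?D = "connected_component_of_set off_line c"
  have CS: "C \<subseteq> S"
    using connected_components_of_subset[OF C] by simp
  then have cT: "c \<in> topspace X" "c \<notin> range h"
    using S c by auto
  have "connectedin off_line C"
    using connectedin_connected_components_of[OF C] CS S by (simp add: connectedin_subtopology)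
  then have "C \<subseteq> ?D"
    using c by (rule connected_component_of_maximal)
  then have yD: "y \<in> X closure_of ?D"
    using y closure_of_mono by blast
  show ?thesis
  proof (cases "y \<in> range h")
    case True
    then obtain s where s: "y = h s"
      by blast
    then have "s = rR X h c"
      using yD h_in_closure_component_iff[OF cT] by simp
    then show ?thesis
      using s by simp
  next
    case False
    have "?D \<subseteq> topspace X - range h"
      using connected_component_of_subset_topspace[of off_line c] by simp
    moreover have "y \<in> topspace X"
      using yD in_closure_of by fast
    ultimately have "y \<in> off_line closure_of ?D"
      using yD False by (simp add: closure_of_subtopology Int_absorb1)
    then have "y \<in> ?D"
      by (simp add: closure_of_closedin closedin_connected_component_of)
    then have "connected_component_of_set off_line y = ?D"
      using connected_component_of_equiv[of off_line c y] by simp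
    then show ?thesis
      unfolding rR_def using False cT(2) by simp
  qed
qed

lemma range_h_subset_TR: "range h \<subseteq> TR X h F"
proof -
  have "h x \<in> topspace X \<inter> (\<Union>n. (F ^^ n) ` range h)" for x
  proof
    show "h x \<in> (\<Union>n. (F ^^ n) ` range h)"
      by (rule UN_I[of 0]) simp_all
  qed (rule h_in_topspace)
  then have "range h \<subseteq> topspace X \<inter> (\<Union>n. (F ^^ n) ` range h)"
    by blast
  then show ?thesis
    unfolding TR_def by (rule order_trans[OF _ closure_of_subset_Int])
qed

lemma branch_subset_Xset:
  assumes "B \<in> branches X h F" shows "B \<subseteq> Xset X h F"
proof
  obtain C where C: "C \<in> connected_components_of (subtopology X (Sset X h F))"
    and B: "B = X closure_of C"
    using assms unfolding branches_def by blast
  obtain c where c: "c \<in> C"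
    using nonempty_connected_components_of[OF C] by blast
  have CS: "C \<subseteq> Sset X h F"
    using connected_components_of_subset[OF C] by simp
  have S: "Sset X h F \<subseteq> topspace X - range h"
    using range_h_subset_TR by (auto simp: Sset_def)
  fix y assume y: "y \<in> B"
  have "rR X h y = rR X h c"
    using rR_closure_component[OF S C c] y B by simp
  moreover have "C \<subseteq> topspace X - TR X h F"
    using CS by (auto simp: Sset_def)
  then have "y \<in> X closure_of (topspace X - TR X h F)"
    using y B closure_of_mono[of C "topspace X - TR X h F"] by blast
  moreover have "y \<in> topspace X"
    using y B in_closure_of by fast
  moreover have "0 \<le> rR X h c \<and> rR X h c < 1"
    using c CS by (auto simp: Sset_def unitfib_def)
  ultimately show "y \<in> Xset X h F"
    by (simp add: Xset_def unitfib_def)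
qed

text \<open>Distinct integer translates of a point have distinct integer parts of their retractions,
  so at most one of them lies in \<open>Xset\<close>.\<close>
lemma angle_singleton_branch:
  assumes "A \<subseteq> B" "B \<in> branches X h F"
  shows "angle X h tau F [A] = A"
proof -
  have AX: "A \<subseteq> Xset X h F"
    using assms branch_subset_Xset by blast
  have integer_translate: "x \<in> A" if "a \<in> A" "x = tpow X tau m a" "x \<in> Xset X h F" for a x m
  proof -
    have "a \<in> topspace X" "0 \<le> rR X h a" "rR X h a < 1" "0 \<le> rR X h x" "rR X h x < 1"
      using that AX Xset_subset_topspace by (auto simp: Xset_def unitfib_def)
    moreover have "rR X h x = rR X h a + of_int m"
      using that rR_tpow by (simp add: \<open>a \<in> topspace X\<close>)
    ultimately have "m = 0"
      by linarith
    then show ?thesis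
      using that by simp
  qed
  have "shiftZ X tau A \<inter> Xset X h F = A"
  proof (intro equalityI subsetI)
    fix x assume "x \<in> shiftZ X tau A \<inter> Xset X h F"
    then show "x \<in> A"
      unfolding mem_shiftZ Int_iff using integer_translate by blast
  next
    fix a assume "a \<in> A"
    then have "a \<in> shiftZ X tau A"
      unfolding mem_shiftZ by (metis tpow_0)
    then show "a \<in> shiftZ X tau A \<inter> Xset X h F"
      using AX \<open>a \<in> A\<close> by blast
  qed
  moreover have "angle X h tau F [A] = shiftZ X tau A \<inter> Xset X h F"
    using Xset_subset_topspace[of X h F] by (auto simp: angle_def)
  ultimately show ?thesis
    by simp
qed

end

lemma basic_partition_subset_branch:
  assumes "basic_partition X h tau F P" "A \<in> P"
  shows "\<exists>B\<in>branches X h F. A \<subseteq> B"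
  using assms(1) unfolding basic_partition_def
  by (elim conjE exE) (drule bspec[OF _ assms(2)], elim conjE bexE, blast)

lemma basic_partition_subset_topspace:
  assumes "basic_partition X h tau F P" shows "\<Union> P \<subseteq> topspace X"
proof -
  have "B \<subseteq> topspace X" if "B \<in> branches X h F" for B
    using that closure_of_subset_topspace[of X] by (auto simp: branches_def)
  then show ?thesis
    using basic_partition_subset_branch[OF assms] by blast
qed

lemma seq_equiv_refl_partition:
  assumes "lifted_graph X h tau" "basic_partition X h tau F P" "As \<in> lists P" "As \<noteq> []"
  shows "seq_equiv X h tau F As As"
proof (rule seq_equiv_refl[OF assms(4)])
  have "hd As \<in> P"
    using assms(3,4) by (cases As) auto
  then obtain B where "B \<in> branches X h F" "hd As \<subseteq> B"
    using basic_partition_subset_branch[OF assms(2)] by blast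
  then show "angle X h tau F [hd As] = hd As"
    using angle_singleton_branch[OF assms(1)] by simp
qed

lemma cls_snoc_eq:
  assumes hom: "homeomorphic_map X X tau" and cont: "continuous_map X X F"
    and deg: "degree_one X tau F" and sub: "\<Union> P \<subseteq> topspace X"
    and "As \<in> lists P" "Bs \<in> lists P" "B \<in> P" and equiv: "seq_equiv X h tau F As Bs"
  shows "cls X h tau F P (As @ [B]) = cls X h tau F P (Bs @ [B])"
proof -
  have sub_lists: "\<Union> (set Cs) \<subseteq> topspace X" if "Cs \<in> lists P" for Cs
    using that sub by blast
  have subA: "\<Union> (set (As @ [B])) \<subseteq> topspace X" and subB: "\<Union> (set (Bs @ [B])) \<subseteq> topspace X"
    using sub_lists[of "As @ [B]"] sub_lists[of "Bs @ [B]"] assms(5-7) by simp_all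
  have snoc: "seq_equiv X h tau F (As @ [B]) (Bs @ [B])"
    using seq_equiv_snoc[OF equiv] .
  have "seq_equiv X h tau F (As @ [B]) Cs \<longleftrightarrow> seq_equiv X h tau F (Bs @ [B]) Cs"
    if "Cs \<in> lists P" for Cs
    using seq_equiv_trans[OF hom cont deg subA subB sub_lists[OF that] snoc]
      seq_equiv_trans[OF hom cont deg subB subA sub_lists[OF that] seq_equiv_sym[OF snoc]] by blast
  then show ?thesis
    by (auto simp: cls_def)
qed

theorem mainTheorem12:
  fixes X :: "'a topology" and h :: "real \<Rightarrow> 'a" and tau F :: "'a \<Rightarrow> 'a"
    and P :: "'a set set" and As :: "'a set list" and \<alpha> \<beta> :: "'a set list set"
  assumes "lifted_graph X h tau"
    and "continuous_map X X F"
    and "degree_one X tau F"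
    and "sun_like X h F"
    and "basic_partition X h tau F P"
    and "\<alpha> \<in> cg_vertices X h tau F P"
    and "As \<in> lists P" and "As \<noteq> []" and "\<alpha> = cls X h tau F P As"
    and "cg_arrow X h tau F P \<alpha> \<beta>"
  shows "\<exists>A\<in>P. \<beta> = cls X h tau F P (As @ [A])"
proof -
  have "\<exists>Bs\<in>lists P. Bs \<noteq> [] \<and> (\<exists>B\<in>P. \<alpha> = cls X h tau F P Bs \<and> \<beta> = cls X h tau F P (Bs @ [B]))"
    using assms(10) unfolding cg_arrow_def by (elim conjE)
  then obtain Bs B where Bs: "Bs \<in> lists P" and B: "B \<in> P"
    and \<alpha>: "\<alpha> = cls X h tau F P Bs" and \<beta>: "\<beta> = cls X h tau F P (Bs @ [B])"
    by blast
  have "As \<in> cls X h tau F P As"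
    using seq_equiv_refl_partition[OF assms(1,5,7,8)] assms(7) by (simp add: cls_def)
  then have "As \<in> cls X h tau F P Bs"
    using assms(9) \<alpha> by simp
  then have "seq_equiv X h tau F Bs As"
    by (simp add: cls_def)
  then have "cls X h tau F P (Bs @ [B]) = cls X h tau F P (As @ [B])"
    using cls_snoc_eq[OF lifted_graph_homeomorphic_tau[OF assms(1)] assms(2,3)
        basic_partition_subset_topspace[OF assms(5)] Bs assms(7) B] by blast
  then show ?thesis
    using \<beta> B by (intro bexI[of _ B]) simp_all
qed

end
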